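(* Let $f:M^{n}\to\mathbb{R}^{n+p}$, $n\ge 2$, $p\ge 2$, be an umbilic-free isometric immersion with flat normal bundle and semi-parallel Moebius second fundamental form. If $f$ has $n$ distinct principal normal vector fields, then the Moebius metric of $f$ has vanishing sectional curvature (i.e. $f$ has vanishing Moebius curvature).
   Context: Let $f:M^n\to\mathbb{R}^{m}$ be an isometric immersion of a Riemannian manifold $(M^n,\langle\cdot,\cdot\rangle)$ with second fundamental form $\alpha$, mean curvature vector $\mathcal H=\frac1n\operatorname{tr}\alpha$ and normal connection $\nabla^\perp$ with curvature $R^\perp$. Put $\rho^2=\frac{n}{n-1}(\|\alpha\|^2-n\|\mathcal H\|^2)$; $f$ is umbilic-free if $\rho>0$ everywhere. The Moebius metric is $\langle\cdot,\cdot\rangle^*=\rho^2\langle\cdot,\cdot\rangle$, with Levi-Civita connection $\nabla^*$ and curvature $R^*$; the Moebius second fundamental form is $\beta=\rho(\alpha-\mathcal H\langle\cdot,\cdot\rangle)$. $f$ has semi-parallel Moebius second fundamental form if $R^\perp(X,Y)\beta(Z,W)-\beta(R^*(X,Y)Z,W)-\beta(Z,R^*(X,Y)W)=0$ for all tangent $X,Y,Z,W$. $f$ has flat normal bundle if $R^\perp=0$; then there are pairwise distinct normal vector fields $\eta_1,\dots,\eta_k$ (principal normal vector fields) and an orthogonal decomposition $TM=E_{\eta_1}\oplus\cdots\oplus E_{\eta_k}$ with $\alpha(X,Y)=\langle X,Y\rangle\eta_i$ for $X\in E_{\eta_i}$, $Y\in TM$. Having $n$ distinct principal normals means $k=n$,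 each $E_{\eta_i}$ being a line field. *)

theory Defs
  imports "HOL-Analysis.Analysis"
begin

text \<open>Local (coordinate) setting: M is an open set U of R^n with the metric induced
by the immersion f : U -> R^(n+p). Tangent vectors at x are coordinate vectors X :: real^'n
(X = sum_i X_i d_i).\<close>

definition pd :: "'n::finite \<Rightarrow> (real^'n \<Rightarrow> 'b::real_normed_vector) \<Rightarrow> real^'n \<Rightarrow> 'b" where
  "pd i F x = frechet_derivative F (at x) (axis i 1)"

primrec dpart :: "'n::finite list \<Rightarrow> (real^'n \<Rightarrow> 'b::real_normed_vector) \<Rightarrow> real^'n \<Rightarrow> 'b" where
  "dpart [] F = F"
| "dpart (i # is) F = pd i (dpart is F)"

definition smooth_on :: "(real^'n::finite) set \<Rightarrow> (real^'n \<Rightarrow> 'b::real_normed_vector) \<Rightarrow> bool" where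
  "smooth_on U F \<longleftrightarrow> (\<forall>is. dpart is F differentiable_on U)"

definition immersion_on :: "(real^'n::finite) set \<Rightarrow> (real^'n \<Rightarrow> real^'m::finite) \<Rightarrow> bool" where
  "immersion_on U f \<longleftrightarrow> open U \<and> smooth_on U f \<and>
     (\<forall>x\<in>U. inj (\<lambda>i. pd i f x) \<and> independent (range (\<lambda>i. pd i f x)))"

definition gmat :: "(real^'n::finite \<Rightarrow> real^'m::finite) \<Rightarrow> real^'n \<Rightarrow> real^'n^'n" where
  "gmat f x = (\<chi> i j. pd i f x \<bullet> pd j f x)"

definition ginv :: "(real^'n::finite \<Rightarrow> real^'m::finite) \<Rightarrow> real^'n \<Rightarrow> real^'n^'n" where
  "ginv f x = matrix_inv (gmat f x)"

definition ip :: "(real^'n::finite \<Rightarrow> real^'m::finite) \<Rightarrow> real^'n \<Rightarrow> real^'n \<Rightarrow> real^'n \<Rightarrow> real" where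
  "ip f x X Y = (\<Sum>i\<in>UNIV. \<Sum>j\<in>UNIV. X$i * Y$j * gmat f x $ i $ j)"

definition tproj :: "(real^'n::finite \<Rightarrow> real^'m::finite) \<Rightarrow> real^'n \<Rightarrow> real^'m \<Rightarrow> real^'m" where
  "tproj f x v = (\<Sum>i\<in>UNIV. \<Sum>j\<in>UNIV. (ginv f x $ i $ j * (v \<bullet> pd j f x)) *\<^sub>R pd i f x)"

definition nproj :: "(real^'n::finite \<Rightarrow> real^'m::finite) \<Rightarrow> real^'n \<Rightarrow> real^'m \<Rightarrow> real^'m" where
  "nproj f x v = v - tproj f x v"

definition sff :: "(real^'n::finite \<Rightarrow> real^'m::finite) \<Rightarrow> real^'n \<Rightarrow> real^'n \<Rightarrow> real^'n \<Rightarrow> real^'m" where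
  "sff f x X Y = nproj f x (\<Sum>i\<in>UNIV. \<Sum>j\<in>UNIV. (X$i * Y$j) *\<^sub>R pd i (pd j f) x)"

definition meanc :: "(real^'n::finite \<Rightarrow> real^'m::finite) \<Rightarrow> real^'n \<Rightarrow> real^'m" where
  "meanc f x = (1 / real CARD('n)) *\<^sub>R
     (\<Sum>i\<in>UNIV. \<Sum>j\<in>UNIV. ginv f x $ i $ j *\<^sub>R sff f x (axis i 1) (axis j 1))"

definition sffnorm2 :: "(real^'n::finite \<Rightarrow> real^'m::finite) \<Rightarrow> real^'n \<Rightarrow> real" where
  "sffnorm2 f x = (\<Sum>i\<in>UNIV. \<Sum>j\<in>UNIV. \<Sum>k\<in>UNIV. \<Sum>l\<in>UNIV.
      ginv f x $ i $ k * ginv f x $ j $ l *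
      (sff f x (axis i 1) (axis j 1) \<bullet> sff f x (axis k 1) (axis l 1)))"

definition rho :: "(real^'n::finite \<Rightarrow> real^'m::finite) \<Rightarrow> real^'n \<Rightarrow> real" where
  "rho f x = sqrt (real CARD('n) / (real CARD('n) - 1) *
      (sffnorm2 f x - real CARD('n) * (norm (meanc f x))\<^sup>2))"

definition umbilic_free :: "(real^'n::finite) set \<Rightarrow> (real^'n \<Rightarrow> real^'m::finite) \<Rightarrow> bool" where
  "umbilic_free U f \<longleftrightarrow> (\<forall>x\<in>U. rho f x > 0)"

definition mgmat :: "(real^'n::finite \<Rightarrow> real^'m::finite) \<Rightarrow> real^'n \<Rightarrow> real^'n^'n" where
  "mgmat f x = (\<chi> i j. (rho f x)\<^sup>2 * gmat f x $ i $ j)"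

definition mginv :: "(real^'n::finite \<Rightarrow> real^'m::finite) \<Rightarrow> real^'n \<Rightarrow> real^'n^'n" where
  "mginv f x = matrix_inv (mgmat f x)"

definition mip :: "(real^'n::finite \<Rightarrow> real^'m::finite) \<Rightarrow> real^'n \<Rightarrow> real^'n \<Rightarrow> real^'n \<Rightarrow> real" where
  "mip f x X Y = (\<Sum>i\<in>UNIV. \<Sum>j\<in>UNIV. X$i * Y$j * mgmat f x $ i $ j)"

definition christ :: "(real^'n::finite \<Rightarrow> real^'m::finite) \<Rightarrow> 'n \<Rightarrow> 'n \<Rightarrow> 'n \<Rightarrow> real^'n \<Rightarrow> real" where
  "christ f l i j x = 1/2 * (\<Sum>k\<in>UNIV. mginv f x $ l $ k *
      (pd i (\<lambda>y. mgmat f y $ j $ k) x + pd j (\<lambda>y. mgmat f y $ i $ k) x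
       - pd k (\<lambda>y. mgmat f y $ i $ j) x))"

text \<open>R(d_i,d_j)d_k = nabla_i nabla_j d_k - nabla_j nabla_i d_k = sum_l riem l i j k d_l.\<close>
definition riem :: "(real^'n::finite \<Rightarrow> real^'m::finite) \<Rightarrow> 'n \<Rightarrow> 'n \<Rightarrow> 'n \<Rightarrow> 'n \<Rightarrow> real^'n \<Rightarrow> real" where
  "riem f l i j k x = pd i (christ f l j k) x - pd j (christ f l i k) x
     + (\<Sum>m\<in>UNIV. christ f l i m x * christ f m j k x - christ f l j m x * christ f m i k x)"

definition mcurv :: "(real^'n::finite \<Rightarrow> real^'m::finite) \<Rightarrow> real^'n \<Rightarrow> real^'n \<Rightarrow> real^'n \<Rightarrow> real^'n \<Rightarrow> real^'n" where
  "mcurv f x X Y Z = (\<chi> l. \<Sum>i\<in>UNIV. \<Sum>j\<in>UNIV. \<Sum>k\<in>UNIV. X$i * Y$j * Z$k * riem f l i j k x)"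

definition msec :: "(real^'n::finite \<Rightarrow> real^'m::finite) \<Rightarrow> real^'n \<Rightarrow> real^'n \<Rightarrow> real^'n \<Rightarrow> real" where
  "msec f x X Y = mip f x (mcurv f x X Y Y) X /
      (mip f x X X * mip f x Y Y - (mip f x X Y)\<^sup>2)"

definition mbeta :: "(real^'n::finite \<Rightarrow> real^'m::finite) \<Rightarrow> real^'n \<Rightarrow> real^'n \<Rightarrow> real^'n \<Rightarrow> real^'m" where
  "mbeta f x X Y = rho f x *\<^sub>R (sff f x X Y - ip f x X Y *\<^sub>R meanc f x)"

definition nconn :: "(real^'n::finite \<Rightarrow> real^'m::finite) \<Rightarrow> 'n \<Rightarrow> (real^'n \<Rightarrow> real^'m) \<Rightarrow> real^'n \<Rightarrow> real^'m" where
  "nconn f i xi x = nproj f x (pd i xi x)"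

definition rperp :: "(real^'n::finite \<Rightarrow> real^'m::finite) \<Rightarrow> real^'n \<Rightarrow> real^'n \<Rightarrow> real^'n \<Rightarrow> (real^'n \<Rightarrow> real^'m) \<Rightarrow> real^'m" where
  "rperp f x X Y xi = (\<Sum>i\<in>UNIV. \<Sum>j\<in>UNIV. (X$i * Y$j) *\<^sub>R
      (nconn f i (nconn f j xi) x - nconn f j (nconn f i xi) x))"

definition flat_normal_bundle :: "(real^'n::finite) set \<Rightarrow> (real^'n \<Rightarrow> real^'m::finite) \<Rightarrow> bool" where
  "flat_normal_bundle U f \<longleftrightarrow>
     (\<forall>xi. smooth_on U xi \<and> (\<forall>x\<in>U. nproj f x (xi x) = xi x) \<longrightarrow>
        (\<forall>x\<in>U. \<forall>X Y. rperp f x X Y xi = 0))"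

definition semi_parallel_moebius :: "(real^'n::finite) set \<Rightarrow> (real^'n \<Rightarrow> real^'m::finite) \<Rightarrow> bool" where
  "semi_parallel_moebius U f \<longleftrightarrow>
     (\<forall>x\<in>U. \<forall>X Y Z W. rperp f x X Y (\<lambda>y. mbeta f y Z W)
        - mbeta f x (mcurv f x X Y Z) W - mbeta f x Z (mcurv f x X Y W) = 0)"

text \<open>n pairwise distinct principal normal vector fields eta_i, each E_(eta_i) a line,
  TM = E_1 (+) ... (+) E_n orthogonal, alpha(X,Y) = <X,Y> eta_i for X in E_i.\<close>
definition n_distinct_principal_normals :: "(real^'n::finite) set \<Rightarrow> (real^'n \<Rightarrow> real^'m::finite) \<Rightarrow> bool" where
  "n_distinct_principal_normals U f \<longleftrightarrow>
     (\<exists>eta :: 'n \<Rightarrow> real^'n \<Rightarrow> real^'m.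
        (\<forall>i. smooth_on U (eta i)) \<and>
        (\<forall>x\<in>U. \<forall>i j. i \<noteq> j \<longrightarrow> eta i x \<noteq> eta j x) \<and>
        (\<forall>x\<in>U. \<exists>e :: 'n \<Rightarrow> real^'n.
           (\<forall>i. e i \<noteq> 0) \<and> (\<forall>i j. i \<noteq> j \<longrightarrow> ip f x (e i) (e j) = 0) \<and>
           (\<forall>i Y. sff f x (e i) Y = ip f x (e i) Y *\<^sub>R eta i x)))"

end

(*
  Flatness of the normal bundle removes the normal curvature term from the semi-parallelity
  equation, leaving beta(R*(X,Y)Z, W) + beta(Z, R*(X,Y)W) = 0.  In an orthogonal frame
  e_1, ..., e_n of principal directions, beta(e_k, W) = rho <e_k, W> (eta_k - H).  Put
  a = <e_k, R*(X,Y) e_j>.  Since R*(X,Y) is skew-adjoint for the Moebius metric, a conformal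
  multiple of <,>, the equation with Z = e_k and W = e_j becomes rho a (eta_k - eta_j) = 0.
  Hence a = 0 for k <> j because the principal normals are distinct, and a = 0 for k = j by
  skew-adjointness.  So R* = 0 and every sectional curvature vanishes.

  In coordinates, the skew-adjointness of R*(X,Y) rests on the symmetry of the second partial
  derivatives of the metric, which is proved from the mean value theorem.
*)

theory Submission
  imports Defs
begin

lemma pd_has_derivative:
  assumes "(F has_derivative D) (at x)"
  shows "pd i F x = D (axis i 1)"
  using frechet_derivative_at[OF assms] unfolding pd_def by simp

lemma pd_cong:
  assumes "open U" "x \<in> U" "\<And>y. y \<in> U \<Longrightarrow> F y = G y"
  shows "pd i F x = pd i G x"
proof -
  have "(F has_derivative D) (at x) \<longleftrightarrow> (G has_derivative D) (at x)" for D
    using has_derivative_transform_within_open[OF _ assms(1,2), of F _ UNIV G]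
      has_derivative_transform_within_open[OF _ assms(1,2), of G _ UNIV F] assms(3)
    by auto
  then show ?thesis unfolding pd_def frechet_derivative_def by simp
qed

lemma pd_const: "pd i (\<lambda>y. c) = (\<lambda>y. 0)"
  by (simp add: pd_has_derivative[OF has_derivative_const] fun_eq_iff)

lemma pd_add:
  assumes "F differentiable at x" "G differentiable at x"
  shows "pd i (\<lambda>y. F y + G y) x = pd i F x + pd i G x"
  using pd_has_derivative[OF has_derivative_add[OF assms[THEN frechet_derivative_works[THEN iffD1]]]]
  by (simp add: pd_def)

lemma pd_sum:
  assumes "finite S" "\<And>s. s \<in> S \<Longrightarrow> F s differentiable at x"
  shows "pd i (\<lambda>y. \<Sum>s\<in>S. F s y) x = (\<Sum>s\<in>S. pd i (F s) x)"
proof -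
  have "((\<lambda>y. \<Sum>s\<in>S. F s y) has_derivative (\<lambda>h. \<Sum>s\<in>S. frechet_derivative (F s) (at x) h)) (at x)"
    using assms by (intro has_derivative_sum) (auto simp: frechet_derivative_works)
  from pd_has_derivative[OF this] show ?thesis by (simp add: pd_def)
qed

lemma pd_bounded_linear:
  assumes "bounded_linear L" "F differentiable at x"
  shows "pd i (\<lambda>y. L (F y)) x = L (pd i F x)"
  using pd_has_derivative[OF bounded_linear.has_derivative[OF assms(1)
      assms(2)[THEN frechet_derivative_works[THEN iffD1]]]]
  by (simp add: pd_def)

lemma pd_bounded_bilinear:
  fixes prod :: "'a::real_normed_vector \<Rightarrow> 'b::real_normed_vector \<Rightarrow> 'c::real_normed_vector"
  assumes "bounded_bilinear prod" "F differentiable at x" "G differentiable at x"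
  shows "pd i (\<lambda>y. prod (F y) (G y)) x = prod (pd i F x) (G x) + prod (F x) (pd i G x)"
  using pd_has_derivative[OF bounded_bilinear.FDERIV[OF assms(1)
      assms(2,3)[THEN frechet_derivative_works[THEN iffD1]]]]
  by (simp add: pd_def add.commute)

lemma pd_compose_real:
  assumes "(h has_real_derivative h') (at (F x))" "F differentiable at x"
  shows "pd i (\<lambda>y. h (F y)) x = h' * pd i F x"
  using pd_has_derivative[OF has_derivative_compose[OF
      assms(2)[THEN frechet_derivative_works[THEN iffD1]] assms(1)[unfolded has_field_derivative_def]]]
  by (simp add: pd_def)

lemma differentiable_bounded_bilinear:
  fixes prod :: "'a::real_normed_vector \<Rightarrow> 'b::real_normed_vector \<Rightarrow> 'c::real_normed_vector"
  assumes "bounded_bilinear prod" "F differentiable at x" "G differentiable at x"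
  shows "(\<lambda>y. prod (F y) (G y)) differentiable at x"
  using bounded_bilinear.FDERIV[OF assms(1) assms(2,3)[THEN frechet_derivative_works[THEN iffD1]]]
  by (rule differentiableI)

lemma differentiable_bounded_linear:
  assumes "bounded_linear L" "F differentiable at x"
  shows "(\<lambda>y. L (F y)) differentiable at x"
  using bounded_linear.has_derivative[OF assms(1) assms(2)[THEN frechet_derivative_works[THEN iffD1]]]
  by (rule differentiableI)

lemma differentiable_on_cong:
  assumes "\<And>y. y \<in> U \<Longrightarrow> F y = G y" "F differentiable_on U"
  shows "G differentiable_on U"
  using assms differentiable_transform_within[OF _ zero_less_one]
  unfolding differentiable_on_def by blast

section \<open>Smooth functions\<close>

fun differentiable_upto ::
  "nat \<Rightarrow> (real^'n::finite) set \<Rightarrow> (real^'n \<Rightarrow> 'b::real_normed_vector) \<Rightarrow> bool" where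
  "differentiable_upto 0 U F \<longleftrightarrow> F differentiable_on U"
| "differentiable_upto (Suc k) U F \<longleftrightarrow>
     F differentiable_on U \<and> (\<forall>i. differentiable_upto k U (pd i F))"

lemma differentiable_upto_imp_differentiable_on:
  "differentiable_upto k U F \<Longrightarrow> F differentiable_on U"
  by (cases k) auto

lemma differentiable_upto_const: "differentiable_upto k U (\<lambda>y. c)"
  by (induction k arbitrary: c) (simp_all add: pd_const)

lemma differentiable_upto_mono:
  "differentiable_upto (Suc k) U F \<Longrightarrow> differentiable_upto k U F"
  by (induction k arbitrary: F) auto

lemma differentiable_upto_iff_dpart:
  "differentiable_upto k U F \<longleftrightarrow> (\<forall>is. length is \<le> k \<longrightarrow> dpart is F differentiable_on U)"
proof (induction k arbitrary: F)
  case 0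
  then show ?case by auto
next
  case (Suc k)
  have dpart_snoc: "dpart (is @ [i]) F = dpart is (pd i F)" for "is" i
    by (induction "is") auto
  have "(\<forall>is. length is \<le> Suc k \<longrightarrow> dpart is F differentiable_on U) \<longleftrightarrow>
      F differentiable_on U \<and> (\<forall>i is. length is \<le> k \<longrightarrow> dpart (is @ [i]) F differentiable_on U)"
    by (metis (no_types, lifting) dpart.simps(1) length_append_singleton list.size(3)
        not_less_eq_eq rev_exhaust zero_le)
  then show ?case by (simp add: Suc.IH dpart_snoc)
qed

lemma smooth_on_iff_differentiable_upto: "smooth_on U F \<longleftrightarrow> (\<forall>k. differentiable_upto k U F)"
  unfolding smooth_on_def differentiable_upto_iff_dpart by auto

lemma smooth_on_pd: "smooth_on U F \<Longrightarrow> smooth_on U (pd i F)"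
  by (metis smooth_on_iff_differentiable_upto differentiable_upto.simps(2))

lemma smooth_on_imp_differentiable_on: "smooth_on U F \<Longrightarrow> F differentiable_on U"
  by (metis smooth_on_iff_differentiable_upto differentiable_upto.simps(1))

lemma smooth_on_const: "smooth_on U (\<lambda>y. c)"
  by (simp add: smooth_on_iff_differentiable_upto differentiable_upto_const)

lemma matrix_inv_right:
  fixes A :: "real^'k::finite^'k"
  assumes "det A \<noteq> 0"
  shows "A ** matrix_inv A = mat 1"
proof -
  have "\<exists>A'. A ** A' = mat 1 \<and> A' ** A = mat 1"
    using assms invertible_det_nz unfolding invertible_def by blast
  from someI_ex[OF this] show ?thesis
    unfolding matrix_inv_def by auto
qed

lemma matrix_inv_cramer:
  fixes A :: "real^'k::finite^'k"
  assumes "det A \<noteq> 0"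
  shows "matrix_inv A $ i $ j = det (\<chi> a c. if c = i then axis j 1 $ a else A $ a $ c) / det A"
proof -
  have "A *v (matrix_inv A *v axis j 1) = axis j 1"
    by (simp add: matrix_vector_mul_assoc matrix_inv_right[OF assms])
  then have "matrix_inv A *v axis j 1 = (\<chi> k. det (\<chi> a c. if c = k then axis j 1 $ a else A $ a $ c) / det A)"
    using cramer[OF assms] by blast
  moreover have "(matrix_inv A *v axis j 1) $ i = matrix_inv A $ i $ j"
    by (simp add: matrix_vector_mult_basis column_def)
  ultimately show ?thesis by simp
qed

context
  fixes U :: "(real^'n::finite) set"
  assumes U: "open U"
begin

lemma differentiable_upto_cong:
  "(\<And>y. y \<in> U \<Longrightarrow> F y = G y) \<Longrightarrow> differentiable_upto k U F \<Longrightarrow> differentiable_upto k U G"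
proof (induction k arbitrary: F G)
  case 0
  then show ?case by (metis differentiable_on_cong differentiable_upto.simps(1))
next
  case (Suc k)
  have "pd i F y = pd i G y" if "y \<in> U" for i y
    using pd_cong[OF U that] Suc.prems(1) by blast
  then show ?case
    using Suc differentiable_on_cong[of U F G] by (metis differentiable_upto.simps(2))
qed

lemma differentiable_upto_add:
  "differentiable_upto k U F \<Longrightarrow> differentiable_upto k U G \<Longrightarrow>
    differentiable_upto k U (\<lambda>y. F y + G y)"
proof (induction k arbitrary: F G)
  case 0
  then show ?case by auto
next
  case (Suc k)
  have "differentiable_upto k U (pd i (\<lambda>y. F y + G y))" for i
  proof (rule differentiable_upto_cong)
    show "differentiable_upto k U (\<lambda>y. pd i F y + pd i G y)"
      using Suc by auto
    show "pd i F y + pd i G y = pd i (\<lambda>y. F y + G y) y" if "y \<in> U" for y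
      using Suc.prems that U by (auto simp: pd_add differentiable_on_eq_differentiable_at)
  qed
  then show ?case using Suc.prems by auto
qed

lemma differentiable_upto_bounded_bilinear:
  fixes prod :: "'a::real_normed_vector \<Rightarrow> 'b::real_normed_vector \<Rightarrow> 'c::real_normed_vector"
  assumes prod: "bounded_bilinear prod"
  shows "differentiable_upto k U F \<Longrightarrow> differentiable_upto k U G \<Longrightarrow>
    differentiable_upto k U (\<lambda>y. prod (F y) (G y))"
proof (induction k arbitrary: F G)
  case 0
  then show ?case
    using U by (auto simp: differentiable_on_eq_differentiable_at intro: differentiable_bounded_bilinear[OF prod])
next
  case (Suc k)
  have diff: "F differentiable at y" "G differentiable at y" if "y \<in> U" for y
    using Suc.prems that U by (auto simp: differentiable_on_eq_differentiable_at)
  have "differentiable_upto k U (pd i (\<lambda>y. prod (F y) (G y)))" for i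
  proof (rule differentiable_upto_cong)
    have "differentiable_upto k U F" "differentiable_upto k U (pd i F)"
      "differentiable_upto k U G" "differentiable_upto k U (pd i G)"
      using Suc.prems differentiable_upto_mono by auto
    then show "differentiable_upto k U (\<lambda>y. prod (pd i F y) (G y) + prod (F y) (pd i G y))"
      by (simp add: Suc.IH differentiable_upto_add)
    show "prod (pd i F y) (G y) + prod (F y) (pd i G y) = pd i (\<lambda>y. prod (F y) (G y)) y"
      if "y \<in> U" for y
      using pd_bounded_bilinear[OF prod diff[OF that]] by simp
  qed
  moreover have "(\<lambda>y. prod (F y) (G y)) differentiable_on U"
    using differentiable_bounded_bilinear[OF prod diff] U
    by (simp add: differentiable_on_eq_differentiable_at)
  ultimately show ?case by simp
qed

lemma differentiable_upto_bounded_linear: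
  assumes L: "bounded_linear L"
  shows "differentiable_upto k U F \<Longrightarrow> differentiable_upto k U (\<lambda>y. L (F y))"
proof (induction k arbitrary: F)
  case 0
  then show ?case
    using U by (auto simp: differentiable_on_eq_differentiable_at intro: differentiable_bounded_linear[OF L])
next
  case (Suc k)
  have diff: "F differentiable at y" if "y \<in> U" for y
    using Suc.prems that U by (auto simp: differentiable_on_eq_differentiable_at)
  have "differentiable_upto k U (pd i (\<lambda>y. L (F y)))" for i
  proof (rule differentiable_upto_cong)
    show "differentiable_upto k U (\<lambda>y. L (pd i F y))"
      using Suc by auto
    show "L (pd i F y) = pd i (\<lambda>y. L (F y)) y" if "y \<in> U" for y
      using pd_bounded_linear[OF L diff[OF that]] by simp
  qed
  moreover have "(\<lambda>y. L (F y)) differentiable_on U"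
    using differentiable_bounded_linear[OF L diff] U
    by (simp add: differentiable_on_eq_differentiable_at)
  ultimately show ?case by simp
qed

lemma differentiable_upto_compose_real:
  fixes H :: "nat \<Rightarrow> real \<Rightarrow> real" and F :: "real^'n \<Rightarrow> real"
  assumes H: "\<And>j t. t \<in> V \<Longrightarrow> (H j has_real_derivative H (Suc j) t) (at t)"
    and F: "\<And>y. y \<in> U \<Longrightarrow> F y \<in> V"
  shows "differentiable_upto k U F \<Longrightarrow> differentiable_upto k U (\<lambda>y. H j (F y))"
proof (induction k arbitrary: j)
  case 0
  have "(\<lambda>y. H j (F y)) differentiable at y" if "y \<in> U" for y
    using differentiable_chain_at[of F y "H j"] H[OF F[OF that], of j]
      differentiable_upto_imp_differentiable_on[OF 0] that U
    by (auto simp: o_def differentiable_on_eq_differentiable_at real_differentiable_def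
        has_field_derivative_def differentiable_def)
  then show ?case
    using U by (simp add: differentiable_on_eq_differentiable_at)
next
  case (Suc k)
  have dF: "F differentiable at y" if "y \<in> U" for y
    using Suc.prems that U by (auto simp: differentiable_on_eq_differentiable_at)
  have "differentiable_upto k U (pd i (\<lambda>y. H j (F y)))" for i
  proof (rule differentiable_upto_cong)
    have "differentiable_upto k U F" "differentiable_upto k U (pd i F)"
      using Suc.prems differentiable_upto_mono by auto
    then show "differentiable_upto k U (\<lambda>y. H (Suc j) (F y) * pd i F y)"
      using Suc.IH by (intro differentiable_upto_bounded_bilinear[OF bounded_bilinear_mult])
    show "H (Suc j) (F y) * pd i F y = pd i (\<lambda>y. H j (F y)) y" if "y \<in> U" for y
      using pd_compose_real[OF H[OF F[OF that]] dF[OF that]] by simp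
  qed
  moreover have "(\<lambda>y. H j (F y)) differentiable_on U"
    using Suc.IH Suc.prems differentiable_upto_mono differentiable_upto_imp_differentiable_on
    by blast
  ultimately show ?case by simp
qed

lemma smooth_on_imp_differentiable_at: "smooth_on U F \<Longrightarrow> y \<in> U \<Longrightarrow> F differentiable at y"
  using U smooth_on_imp_differentiable_on differentiable_on_eq_differentiable_at by blast

lemma smooth_on_cong: "(\<And>y. y \<in> U \<Longrightarrow> F y = G y) \<Longrightarrow> smooth_on U F \<Longrightarrow> smooth_on U G"
  unfolding smooth_on_iff_differentiable_upto using differentiable_upto_cong[of F G] by blast

lemma smooth_on_add: "smooth_on U F \<Longrightarrow> smooth_on U G \<Longrightarrow> smooth_on U (\<lambda>y. F y + G y)"
  by (simp add: smooth_on_iff_differentiable_upto differentiable_upto_add)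

lemma smooth_on_bounded_bilinear:
  fixes prod :: "'a::real_normed_vector \<Rightarrow> 'b::real_normed_vector \<Rightarrow> 'c::real_normed_vector"
  shows "bounded_bilinear prod \<Longrightarrow> smooth_on U F \<Longrightarrow> smooth_on U G \<Longrightarrow>
    smooth_on U (\<lambda>y. prod (F y) (G y))"
  by (simp add: smooth_on_iff_differentiable_upto differentiable_upto_bounded_bilinear)

lemma smooth_on_bounded_linear:
  "bounded_linear L \<Longrightarrow> smooth_on U F \<Longrightarrow> smooth_on U (\<lambda>y. L (F y))"
  by (simp add: smooth_on_iff_differentiable_upto differentiable_upto_bounded_linear)

lemma smooth_on_compose_real:
  fixes H :: "nat \<Rightarrow> real \<Rightarrow> real" and F :: "real^'n \<Rightarrow> real"
  assumes "\<And>j t. t \<in> V \<Longrightarrow> (H j has_real_derivative H (Suc j) t) (at t)"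
    and "\<And>y. y \<in> U \<Longrightarrow> F y \<in> V" "smooth_on U F"
  shows "smooth_on U (\<lambda>y. H 0 (F y))"
  using differentiable_upto_compose_real[of V H F, OF assms(1,2)] assms(3)
  unfolding smooth_on_iff_differentiable_upto by blast

lemma smooth_on_mult:
  "smooth_on U F \<Longrightarrow> smooth_on U G \<Longrightarrow> smooth_on U (\<lambda>y. F y * G y :: 'a::real_normed_algebra)"
  by (rule smooth_on_bounded_bilinear[OF bounded_bilinear_mult])

lemma smooth_on_scaleR: "smooth_on U F \<Longrightarrow> smooth_on U G \<Longrightarrow> smooth_on U (\<lambda>y. F y *\<^sub>R G y)"
  by (rule smooth_on_bounded_bilinear[OF bounded_bilinear_scaleR])

lemma smooth_on_inner:
  "smooth_on U F \<Longrightarrow> smooth_on U G \<Longrightarrow> smooth_on U (\<lambda>y. inner (F y) (G y :: 'a::real_inner))"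
  by (rule smooth_on_bounded_bilinear[OF bounded_bilinear_inner])

lemma smooth_on_diff: "smooth_on U F \<Longrightarrow> smooth_on U G \<Longrightarrow> smooth_on U (\<lambda>y. F y - G y)"
  using smooth_on_add[of F "\<lambda>y. - G y"] smooth_on_bounded_linear[OF bounded_linear_minus[OF bounded_linear_ident]]
  by fastforce

lemma smooth_on_vec_nth: "smooth_on U F \<Longrightarrow> smooth_on U (\<lambda>y. F y $ k)"
  by (rule smooth_on_bounded_linear[OF bounded_linear_vec_nth])

lemma smooth_on_sum:
  "finite S \<Longrightarrow> (\<And>s. s \<in> S \<Longrightarrow> smooth_on U (F s)) \<Longrightarrow> smooth_on U (\<lambda>y. \<Sum>s\<in>S. F s y)"
  by (induction S rule: finite_induct) (simp_all add: smooth_on_const smooth_on_add)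

lemma smooth_on_prod:
  "finite S \<Longrightarrow> (\<And>s. s \<in> S \<Longrightarrow> smooth_on U (F s)) \<Longrightarrow> smooth_on U (\<lambda>y. \<Prod>s\<in>S. F s y :: real)"
  by (induction S rule: finite_induct) (simp_all add: smooth_on_const smooth_on_mult)

lemma smooth_on_power: "smooth_on U F \<Longrightarrow> smooth_on U (\<lambda>y. F y ^ n :: real)"
  by (induction n) (simp_all add: smooth_on_const smooth_on_mult)

lemma smooth_on_inverse:
  assumes "smooth_on U F" "\<And>y. y \<in> U \<Longrightarrow> F y \<noteq> (0::real)"
  shows "smooth_on U (\<lambda>y. inverse (F y))"
proof -
  define H where "H j t = (\<Prod>m<j. of_int (- 1 - int m)) * power_int t (- 1 - int j)" for j and t :: real
  have D: "(H j has_real_derivative H (Suc j) t) (at t)" if "t \<in> - {0}" for j t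
  proof -
    have "(H j has_real_derivative (\<Prod>m<j. of_int (- 1 - int m)) *
        (of_int (- 1 - int j) * power_int t (- 1 - int j - 1) * 1)) (at t)"
      unfolding H_def by (rule DERIV_cmult, rule DERIV_power_int) (use that in auto)
    moreover have "(\<Prod>m<j. of_int (- 1 - int m)) *
        (of_int (- 1 - int j) * power_int t (- 1 - int j - 1) * 1) = H (Suc j) t"
      by (simp add: H_def algebra_simps)
    ultimately show ?thesis by (rule DERIV_cong)
  qed
  have "smooth_on U (\<lambda>y. H 0 (F y))"
    by (rule smooth_on_compose_real[where V = "- {0}" and H = H, OF D]) (use assms in auto)
  then show ?thesis
    by (rule smooth_on_cong[rotated]) (simp add: H_def power_int_minus)
qed

lemma smooth_on_divide:
  "smooth_on U F \<Longrightarrow> smooth_on U G \<Longrightarrow> (\<And>y. y \<in> U \<Longrightarrow> G y \<noteq> 0) \<Longrightarrow>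
    smooth_on U (\<lambda>y. F y / G y :: real)"
  unfolding divide_inverse by (intro smooth_on_mult smooth_on_inverse)

lemma smooth_on_sqrt:
  assumes "smooth_on U F" "\<And>y. y \<in> U \<Longrightarrow> F y > (0::real)"
  shows "smooth_on U (\<lambda>y. sqrt (F y))"
proof -
  define H where "H j t = (\<Prod>m<j. 1/2 - real m) * t powr (1/2 - real j)" for j and t :: real
  have D: "(H j has_real_derivative H (Suc j) t) (at t)" if "t \<in> {0<..}" for j t
  proof -
    have "(H j has_real_derivative (\<Prod>m<j. 1/2 - real m) *
        ((1/2 - real j) * t powr (1/2 - real j - 1))) (at t)"
      unfolding H_def by (rule DERIV_cmult, rule has_real_derivative_powr) (use that in auto)
    moreover have "(\<Prod>m<j. 1/2 - real m) * ((1/2 - real j) * t powr (1/2 - real j - 1)) = H (Suc j) t"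
      by (simp add: H_def algebra_simps)
    ultimately show ?thesis by (rule DERIV_cong)
  qed
  have "smooth_on U (\<lambda>y. H 0 (F y))"
    by (rule smooth_on_compose_real[where V = "{0<..}" and H = H, OF D]) (use assms in auto)
  then show ?thesis
    by (rule smooth_on_cong[rotated]) (use assms(2) in \<open>simp add: H_def powr_half_sqrt less_imp_le\<close>)
qed

lemma smooth_on_det:
  fixes M :: "real^'n \<Rightarrow> real^'k::finite^'k"
  assumes "\<And>i j. smooth_on U (\<lambda>y. M y $ i $ j)"
  shows "smooth_on U (\<lambda>y. det (M y))"
  unfolding det_def
proof (rule smooth_on_sum)
  show "finite {p. p permutes (UNIV :: 'k set)}"
    by (simp add: finite_permutations)
  show "smooth_on U (\<lambda>y. of_int (sign p) * (\<Prod>i\<in>UNIV. M y $ i $ p i))" for p :: "'k \<Rightarrow> 'k"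
    by (rule smooth_on_mult[OF smooth_on_const smooth_on_prod]) (simp_all add: assms)
qed

lemma smooth_on_matrix_inv:
  fixes M :: "real^'n \<Rightarrow> real^'k::finite^'k"
  assumes "\<And>i j. smooth_on U (\<lambda>y. M y $ i $ j)" "\<And>y. y \<in> U \<Longrightarrow> det (M y) \<noteq> 0"
  shows "smooth_on U (\<lambda>y. matrix_inv (M y) $ i $ j)"
proof (rule smooth_on_cong)
  show "det (\<chi> a c. if c = i then axis j 1 $ a else M y $ a $ c) / det (M y) = matrix_inv (M y) $ i $ j"
    if "y \<in> U" for y
    using matrix_inv_cramer[OF assms(2)[OF that]] by simp
  have "smooth_on U (\<lambda>y. (\<chi> a c. if c = i then axis j 1 $ a else M y $ a $ c) $ a $ c)" for a c
    by (cases "c = i") (simp_all add: smooth_on_const assms(1))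
  then show "smooth_on U (\<lambda>y. det (\<chi> a c. if c = i then axis j 1 $ a else M y $ a $ c) / det (M y))"
    by (intro smooth_on_divide smooth_on_det assms) simp_all
qed

end

section \<open>Symmetry of second partial derivatives\<close>

lemma has_real_derivative_along_axis:
  assumes "F differentiable at (p + s *\<^sub>R axis i 1)"
  shows "((\<lambda>s. F (p + s *\<^sub>R axis i 1)) has_real_derivative pd i F (p + s *\<^sub>R axis i 1)) (at s)"
proof -
  let ?y = "p + s *\<^sub>R axis i 1"
  have "((\<lambda>s. p + s *\<^sub>R axis i 1) has_derivative (\<lambda>h. h *\<^sub>R axis i 1)) (at s)"
    by (auto intro!: derivative_eq_intros)
  from has_derivative_compose[OF this assms[THEN frechet_derivative_works[THEN iffD1]]]
  have "((\<lambda>s. F (p + s *\<^sub>R axis i 1)) has_derivative (\<lambda>h. h * pd i F ?y)) (at s)"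
    using linear_scale[OF linear_frechet_derivative[OF assms]] by (simp add: pd_def o_def)
  then show ?thesis
    by (rule has_derivative_imp_has_field_derivative) simp
qed

definition second_difference :: "(real^'n::finite \<Rightarrow> real) \<Rightarrow> real^'n \<Rightarrow> 'n \<Rightarrow> 'n \<Rightarrow> real \<Rightarrow> real" where
  "second_difference F x i j t =
     F (x + t *\<^sub>R axis i 1 + t *\<^sub>R axis j 1) - F (x + t *\<^sub>R axis i 1) - F (x + t *\<^sub>R axis j 1) + F x"

lemma second_difference_commute: "second_difference F x i j t = second_difference F x j i t"
  by (simp add: second_difference_def algebra_simps)

lemma second_difference_mvt:
  fixes F :: "real^'n::finite \<Rightarrow> real"
  assumes "open U" "F differentiable_on U" "0 < t"
    and "\<And>s. 0 \<le> s \<Longrightarrow> s \<le> t \<Longrightarrow> x + s *\<^sub>R axis i 1 \<in> U \<and> x + t *\<^sub>R axis j 1 + s *\<^sub>R axis i 1 \<in> U"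
  shows "\<exists>s\<in>{0<..<t}. second_difference F x i j t =
    t * (pd i F (x + t *\<^sub>R axis j 1 + s *\<^sub>R axis i 1) - pd i F (x + s *\<^sub>R axis i 1))"
proof -
  define g where "g s = F (x + t *\<^sub>R axis j 1 + s *\<^sub>R axis i 1) - F (x + s *\<^sub>R axis i 1)" for s
  have "(g has_real_derivative
      pd i F (x + t *\<^sub>R axis j 1 + s *\<^sub>R axis i 1) - pd i F (x + s *\<^sub>R axis i 1)) (at s)"
    if "0 \<le> s" "s \<le> t" for s
    unfolding g_def using assms(1,2) assms(4)[OF that]
    by (intro DERIV_diff has_real_derivative_along_axis) (auto simp: differentiable_on_eq_differentiable_at)
  then obtain s where "0 < s" "s < t"
    "g t - g 0 = (t - 0) * (pd i F (x + t *\<^sub>R axis j 1 + s *\<^sub>R axis i 1) - pd i F (x + s *\<^sub>R axis i 1))"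
    using MVT2[OF assms(3), of g "\<lambda>s. pd i F (x + t *\<^sub>R axis j 1 + s *\<^sub>R axis i 1) - pd i F (x + s *\<^sub>R axis i 1)"]
    by blast
  moreover have "g t - g 0 = second_difference F x i j t"
    by (simp add: g_def second_difference_def algebra_simps)
  ultimately show ?thesis by auto
qed

lemma norm_scaleR_axis_add_le:
  "0 \<le> s \<Longrightarrow> 0 \<le> c \<Longrightarrow> norm (s *\<^sub>R axis i 1 + c *\<^sub>R axis j 1 :: real^'n::finite) \<le> s + c"
  using norm_triangle_ineq[of "s *\<^sub>R axis i 1 :: real^'n" "c *\<^sub>R axis j 1"] by simp

lemma second_difference_estimate:
  fixes F :: "real^'n::finite \<Rightarrow> real"
  assumes U: "open U" and F: "F differentiable_on U" and L: "linear L" and t: "0 < t" and e: "0 \<le> e"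
    and near: "\<And>h. norm h \<le> 2 * t \<Longrightarrow> x + h \<in> U \<and> \<bar>pd i F (x + h) - pd i F x - L h\<bar> \<le> e * norm h"
  shows "\<bar>second_difference F x i j t - t\<^sup>2 * L (axis j 1)\<bar> \<le> 3 * e * t\<^sup>2"
proof -
  define R where "R h = pd i F (x + h) - pd i F x - L h" for h
  have R: "\<bar>R (a *\<^sub>R axis i 1 + c *\<^sub>R axis j 1)\<bar> \<le> e * (a + c)" "x + (a *\<^sub>R axis i 1 + c *\<^sub>R axis j 1) \<in> U"
    if "0 \<le> a" "a \<le> t" "0 \<le> c" "c \<le> t" for a c
  proof -
    have "norm (a *\<^sub>R axis i 1 + c *\<^sub>R axis j 1 :: real^'n) \<le> a + c"
      using norm_scaleR_axis_add_le that by blast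
    then show "\<bar>R (a *\<^sub>R axis i 1 + c *\<^sub>R axis j 1)\<bar> \<le> e * (a + c)"
        "x + (a *\<^sub>R axis i 1 + c *\<^sub>R axis j 1) \<in> U"
      using near[of "a *\<^sub>R axis i 1 + c *\<^sub>R axis j 1"] that e unfolding R_def
      by (auto intro: order_trans mult_left_mono)
  qed
  have segment: "x + s *\<^sub>R axis i 1 \<in> U \<and> x + t *\<^sub>R axis j 1 + s *\<^sub>R axis i 1 \<in> U"
    if "0 \<le> s" "s \<le> t" for s
    using R(2)[of s 0] R(2)[of s t] that t by (simp add: ac_simps)
  obtain s where s: "0 < s" "s < t" and mvt: "second_difference F x i j t =
      t * (pd i F (x + t *\<^sub>R axis j 1 + s *\<^sub>R axis i 1) - pd i F (x + s *\<^sub>R axis i 1))"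
    using second_difference_mvt[OF U F t segment] by auto
  define R1 where "R1 = R (s *\<^sub>R axis i 1 + t *\<^sub>R axis j 1)"
  define R2 where "R2 = R (s *\<^sub>R axis i 1 + 0 *\<^sub>R axis j 1)"
  have "second_difference F x i j t - t\<^sup>2 * L (axis j 1) = t * (R1 - R2)"
    unfolding mvt R1_def R2_def R_def using linear_add[OF L] linear_scale[OF L]
    by (simp add: algebra_simps power2_eq_square)
  moreover have "\<bar>R1 - R2\<bar> \<le> 3 * e * t"
  proof -
    have "e * (s + t) + e * s \<le> 3 * e * t"
      using s mult_left_mono[of s t e] e by (simp add: algebra_simps)
    then show ?thesis
      using R(1)[of s t] R(1)[of s 0] s abs_triangle_ineq4[of R1 R2] unfolding R1_def R2_def by simp
  qed
  ultimately show ?thesis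
    using t by (simp add: abs_mult power2_eq_square mult_left_mono)
qed

lemma second_difference_tendsto:
  fixes F :: "real^'n::finite \<Rightarrow> real"
  assumes U: "open U" "x \<in> U" and F: "F differentiable_on U" and G: "pd i F differentiable at x"
  shows "((\<lambda>t. second_difference F x i j t / t\<^sup>2) \<longlongrightarrow> pd j (pd i F) x) (at_right 0)"
proof (rule tendstoI)
  fix e :: real
  assume "e > 0"
  define L where "L = frechet_derivative (pd i F) (at x)"
  have L: "(pd i F has_derivative L) (at x)" "linear L" "pd j (pd i F) x = L (axis j 1)"
    using G by (simp_all add: L_def frechet_derivative_works linear_frechet_derivative pd_def)
  obtain d where "d > 0" and d: "\<And>y. norm (y - x) < d \<Longrightarrow>
      \<bar>pd i F y - pd i F x - L (y - x)\<bar> \<le> e / 4 * norm (y - x)"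
    using L(1) \<open>e > 0\<close> unfolding has_derivative_at_alt
    by (metis real_norm_def zero_less_divide_iff zero_less_numeral)
  obtain r where "r > 0" "ball x r \<subseteq> U"
    using U openE by blast
  have "\<bar>second_difference F x i j t / t\<^sup>2 - pd j (pd i F) x\<bar> < e" if t: "0 < t" "t < min d r / 2" for t
  proof -
    have "x + h \<in> U \<and> \<bar>pd i F (x + h) - pd i F x - L h\<bar> \<le> e / 4 * norm h" if "norm h \<le> 2 * t" for h
      using d[of "x + h"] that t \<open>ball x r \<subseteq> U\<close> by (auto simp: dist_norm)
    then have "\<bar>second_difference F x i j t - t\<^sup>2 * L (axis j 1)\<bar> \<le> 3 * (e / 4) * t\<^sup>2"
      using \<open>e > 0\<close> by (intro second_difference_estimate[OF U(1) F L(2) t(1)]) auto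
    moreover have "second_difference F x i j t / t\<^sup>2 - L (axis j 1)
        = (second_difference F x i j t - t\<^sup>2 * L (axis j 1)) / t\<^sup>2"
      using t(1) by (simp add: field_simps)
    ultimately have "\<bar>second_difference F x i j t / t\<^sup>2 - L (axis j 1)\<bar> \<le> 3 / 4 * e"
      using t(1) by (simp add: abs_div divide_le_eq)
    then show ?thesis
      using \<open>e > 0\<close> L(3) by linarith
  qed
  then show "\<forall>\<^sub>F t in at_right 0. dist (second_difference F x i j t / t\<^sup>2) (pd j (pd i F) x) < e"
    unfolding eventually_at_right_field dist_real_def
    using \<open>d > 0\<close> \<open>r > 0\<close> by (intro exI[of _ "min d r / 2"]) auto
qed

lemma pd_commute:
  fixes F :: "real^'n::finite \<Rightarrow> real"
  assumes "open U" "x \<in> U" "F differentiable_on U"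
    and "pd i F differentiable at x" "pd j F differentiable at x"
  shows "pd i (pd j F) x = pd j (pd i F) x"
proof (rule tendsto_unique[OF trivial_limit_at_right_real])
  show "((\<lambda>t. second_difference F x i j t / t\<^sup>2) \<longlongrightarrow> pd i (pd j F) x) (at_right 0)"
    using second_difference_tendsto[OF assms(1-3,5), of i] by (simp add: second_difference_commute)
  show "((\<lambda>t. second_difference F x i j t / t\<^sup>2) \<longlongrightarrow> pd j (pd i F) x) (at_right 0)"
    using second_difference_tendsto[OF assms(1-4)] .
qed

lemma independent_family_comb_eq_0:
  fixes p :: "'i::finite \<Rightarrow> 'v::real_vector"
  assumes "inj p" "independent (range p)" "(\<Sum>i\<in>UNIV. c i *\<^sub>R p i) = 0"
  shows "c i = 0"
proof -
  define u where "u w = c (inv p w)" for w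
  have "(\<Sum>w\<in>range p. u w *\<^sub>R w) = (\<Sum>i\<in>UNIV. u (p i) *\<^sub>R p i)"
    by (rule sum.reindex[OF assms(1), unfolded o_def])
  also have "\<dots> = 0"
    using assms(1,3) by (simp add: u_def)
  finally have "\<forall>w\<in>range p. u w = 0"
    using assms(2) real_vector.dependent_finite[of "range p"] by auto
  then show ?thesis
    using assms(1) by (auto simp: u_def)
qed

lemma bilinear_compose_linear_left:
  assumes "bilinear h" "linear g"
  shows "bilinear (\<lambda>x y. h (g x) y)"
proof -
  have "linear (\<lambda>x. h (g x) y)" for y
    using linear_compose[OF assms(2), of "\<lambda>z. h z y"] assms(1) by (simp add: bilinear_def o_def)
  then show ?thesis
    using assms(1) by (simp add: bilinear_def)
qed

lemma bilinear_compose_linear_right: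
  assumes "bilinear h" "linear g"
  shows "bilinear (\<lambda>x y. h x (g y))"
proof -
  have "linear (\<lambda>y. h x (g y))" for x
    using linear_compose[OF assms(2), of "h x"] assms(1) by (simp add: bilinear_def o_def)
  then show ?thesis
    using assms(1) by (simp add: bilinear_def)
qed

lemma bilinear_add: "bilinear h \<Longrightarrow> bilinear k \<Longrightarrow> bilinear (\<lambda>x y. h x y + k x y)"
  unfolding bilinear_def by (simp add: linear_compose_add)

lemma bilinear_zero: "bilinear (\<lambda>x y. 0)"
  by (simp add: bilinear_def linear_zero)

section \<open>The immersion in coordinates\<close>

definition push_forward :: "(real^'n::finite \<Rightarrow> real^'m::finite) \<Rightarrow> real^'n \<Rightarrow> real^'n \<Rightarrow> real^'m" where
  "push_forward f x v = (\<Sum>i\<in>UNIV. v $ i *\<^sub>R pd i f x)"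

lemma linear_push_forward: "linear (push_forward f x)"
  unfolding push_forward_def
  by (rule linearI) (auto simp: sum.distrib scaleR_add_left scaleR_sum_right)

lemma ip_eq_inner_push_forward: "ip f x X Y = push_forward f x X \<bullet> push_forward f x Y"
  unfolding ip_def push_forward_def gmat_def inner_sum_left
  by (simp add: inner_sum_right sum_distrib_left mult.assoc mult.left_commute)

lemma ip_commute: "ip f x X Y = ip f x Y X"
  by (simp add: ip_eq_inner_push_forward inner_commute)

lemma bilinear_ip: "bilinear (ip f x)"
  unfolding bilinear_def ip_eq_inner_push_forward
  by (auto intro!: linearI simp: linear_add[OF linear_push_forward] linear_scale[OF linear_push_forward]
      inner_add_left inner_add_right)

lemma mip_eq_rho_ip: "mip f x X Y = (rho f x)\<^sup>2 * ip f x X Y"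
  unfolding mip_def ip_def mgmat_def by (simp add: sum_distrib_left ac_simps)

lemma mip_commute: "mip f x X Y = mip f x Y X"
  by (simp add: mip_eq_rho_ip ip_commute)

lemma bilinear_mip: "bilinear (mip f x)"
  unfolding bilinear_def mip_eq_rho_ip ip_eq_inner_push_forward
  by (auto intro!: linearI simp: linear_add[OF linear_push_forward] linear_scale[OF linear_push_forward]
      inner_add_left inner_add_right algebra_simps)

lemma gmat_commute: "gmat f x $ i $ j = gmat f x $ j $ i"
  unfolding gmat_def by (simp add: inner_commute)

lemma mgmat_commute: "mgmat f x $ i $ j = mgmat f x $ j $ i"
  unfolding mgmat_def by (simp add: gmat_commute)

lemma linear_mcurv: "linear (mcurv f x X Y)"
  by (rule linearI) (simp_all add: mcurv_def vec_eq_iff algebra_simps sum.distrib sum_distrib_left)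

lemma linear_tproj: "linear (tproj f x)"
  unfolding tproj_def
  by (rule linearI)
    (auto simp: inner_add_left sum.distrib scaleR_add_left distrib_left scaleR_sum_right ac_simps)

lemma linear_nproj: "linear (nproj f x)"
  unfolding nproj_def using linear_compose_sub[OF linear_ident linear_tproj[of f x]] by (simp add: id_def)

lemma linear_sff_left: "linear (\<lambda>Z. sff f x Z W)"
proof -
  have "linear (\<lambda>Z. \<Sum>i\<in>UNIV. \<Sum>j\<in>UNIV. (Z $ i * W $ j) *\<^sub>R pd i (pd j f) x)"
    by (rule linearI) (simp_all add: algebra_simps sum.distrib scaleR_sum_right scaleR_add_left)
  from linear_compose[OF this linear_nproj] show ?thesis
    unfolding sff_def o_def .
qed

definition normal_space :: "(real^'n::finite \<Rightarrow> real^'m::finite) \<Rightarrow> real^'n \<Rightarrow> (real^'m) set" where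
  "normal_space f x = {v. tproj f x v = 0}"

lemma subspace_normal_space: "subspace (normal_space f x)"
  unfolding normal_space_def by (rule linear_subspace_kernel[OF linear_tproj])

lemma nproj_normal_space: "v \<in> normal_space f x \<Longrightarrow> nproj f x v = v"
  unfolding normal_space_def nproj_def by simp

locale coordinate_immersion =
  fixes U :: "(real^'n::finite) set" and f :: "real^'n \<Rightarrow> real^'m::finite"
  assumes immersion: "immersion_on U f"
begin

lemma open_domain: "open U"
  using immersion by (simp add: immersion_on_def)

lemma smooth_on_pd_immersion: "smooth_on U (pd i f)"
  using immersion by (simp add: immersion_on_def smooth_on_pd)

lemma push_forward_eq_0_iff:
  assumes "x \<in> U"
  shows "push_forward f x v = 0 \<longleftrightarrow> v = 0"
proof
  assume "push_forward f x v = 0"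
  moreover have "inj (\<lambda>i. pd i f x)" "independent (range (\<lambda>i. pd i f x))"
    using immersion assms by (auto simp: immersion_on_def)
  ultimately have "v $ i = 0" for i
    using independent_family_comb_eq_0[of "\<lambda>i. pd i f x" "\<lambda>i. v $ i"] unfolding push_forward_def by blast
  then show "v = 0"
    by (simp add: vec_eq_iff)
qed (simp add: linear_0[OF linear_push_forward])

lemma ip_pos: "x \<in> U \<Longrightarrow> v \<noteq> 0 \<Longrightarrow> ip f x v v > 0"
  by (simp add: ip_eq_inner_push_forward push_forward_eq_0_iff)

lemma det_gmat_nonzero:
  assumes "x \<in> U"
  shows "det (gmat f x) \<noteq> 0"
proof -
  have "v \<bullet> (gmat f x *v v) = ip f x v v" for v
    unfolding ip_def inner_vec_def matrix_vector_mult_def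
    by (simp add: sum_distrib_left mult.assoc mult.commute mult.left_commute)
  then have "gmat f x *v v = 0 \<Longrightarrow> v = 0" for v
    using ip_pos[OF assms, of v] by (metis inner_zero_right less_irrefl)
  then have "inj (\<lambda>v. gmat f x *v v)"
    using linear_injective_0[OF matrix_vector_mul_linear] by blast
  then show ?thesis
    using det_nz_iff_inj[OF matrix_vector_mul_linear[of "gmat f x"]] by (simp add: matrix_of_matrix_vector_mul)
qed

lemma gmat_ginv:
  assumes "x \<in> U"
  shows "(\<Sum>i\<in>UNIV. gmat f x $ b $ i * ginv f x $ i $ j) = (if b = j then 1 else 0)"
proof -
  have "(gmat f x ** ginv f x) $ b $ j = mat 1 $ b $ j"
    unfolding ginv_def by (simp add: matrix_inv_right[OF det_gmat_nonzero[OF assms]])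
  then show ?thesis
    by (simp add: matrix_matrix_mult_def mat_def)
qed

lemma tproj_idem:
  assumes "x \<in> U"
  shows "tproj f x (tproj f x v) = tproj f x v"
proof -
  have "tproj f x v \<bullet> pd b f x = v \<bullet> pd b f x" for b
  proof -
    have "tproj f x v \<bullet> pd b f x =
        (\<Sum>j\<in>UNIV. (\<Sum>i\<in>UNIV. gmat f x $ b $ i * ginv f x $ i $ j) * (v \<bullet> pd j f x))"
      unfolding tproj_def gmat_def inner_sum_left inner_scaleR_left
      by (subst sum.swap) (simp add: inner_commute[of "pd b f x"] sum_distrib_right sum_distrib_left ac_simps)
    also have "\<dots> = v \<bullet> pd b f x"
      by (simp add: gmat_ginv[OF assms] mult_delta_left)
    finally show ?thesis .
  qed
  then show ?thesis
    unfolding tproj_def[of f x "tproj f x v"] by (simp add: tproj_def[of f x v])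
qed

lemma nproj_in_normal_space: "x \<in> U \<Longrightarrow> nproj f x v \<in> normal_space f x"
  unfolding normal_space_def nproj_def by (simp add: linear_diff[OF linear_tproj] tproj_idem)

lemma mbeta_in_normal_space: "x \<in> U \<Longrightarrow> mbeta f x Z W \<in> normal_space f x"
  unfolding mbeta_def meanc_def sff_def
  by (intro subspace_scale[OF subspace_normal_space] subspace_diff[OF subspace_normal_space]
      subspace_sum[OF subspace_normal_space] nproj_in_normal_space)

lemmas smooth_on_intros =
  smooth_on_add[OF open_domain] smooth_on_diff[OF open_domain] smooth_on_sum[OF open_domain]
  smooth_on_mult[OF open_domain] smooth_on_scaleR[OF open_domain] smooth_on_inner[OF open_domain]
  smooth_on_power[OF open_domain] smooth_on_vec_nth[OF open_domain] smooth_on_const finite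

lemma smooth_on_gmat: "smooth_on U (\<lambda>y. gmat f y $ i $ j)"
  unfolding gmat_def by (simp add: smooth_on_intros smooth_on_pd_immersion)

lemma smooth_on_ginv: "smooth_on U (\<lambda>y. ginv f y $ i $ j)"
  unfolding ginv_def
  by (rule smooth_on_matrix_inv[OF open_domain smooth_on_gmat det_gmat_nonzero])

lemma smooth_on_ip: "smooth_on U (\<lambda>y. ip f y Z W)"
  unfolding ip_def by (intro smooth_on_intros smooth_on_gmat)

lemma smooth_on_sff: "smooth_on U (\<lambda>y. sff f y Z W)"
  unfolding sff_def nproj_def tproj_def
  by (intro smooth_on_intros smooth_on_pd_immersion smooth_on_pd[OF smooth_on_pd_immersion] smooth_on_ginv)

lemma smooth_on_meanc: "smooth_on U (meanc f)"
  unfolding meanc_def by (intro smooth_on_intros smooth_on_sff smooth_on_ginv)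

lemma smooth_on_sffnorm2: "smooth_on U (sffnorm2 f)"
  unfolding sffnorm2_def by (intro smooth_on_intros smooth_on_sff smooth_on_ginv)

end

locale umbilic_free_immersion = coordinate_immersion U f
  for U :: "(real^'n::finite) set" and f :: "real^'n \<Rightarrow> real^'m::finite" +
  assumes umbilic_free: "umbilic_free U f"
begin

lemma rho_pos: "y \<in> U \<Longrightarrow> rho f y > 0"
  using umbilic_free by (simp add: umbilic_free_def)

lemma smooth_on_rho: "smooth_on U (rho f)"
proof -
  let ?Q = "\<lambda>y. real CARD('n) / (real CARD('n) - 1) *
    (sffnorm2 f y - real CARD('n) * (meanc f y \<bullet> meanc f y))"
  have "rho f = (\<lambda>y. sqrt (?Q y))"
    by (simp add: fun_eq_iff rho_def power2_norm_eq_inner)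
  moreover have "smooth_on U (\<lambda>y. sqrt (?Q y))"
  proof (rule smooth_on_sqrt[OF open_domain])
    show "smooth_on U ?Q"
      by (intro smooth_on_intros smooth_on_sffnorm2 smooth_on_meanc)
    show "?Q y > 0" if "y \<in> U" for y
      using rho_pos[OF that] by (simp add: rho_def power2_norm_eq_inner)
  qed
  ultimately show ?thesis
    by simp
qed

lemma smooth_on_mbeta: "smooth_on U (\<lambda>y. mbeta f y Z W)"
  unfolding mbeta_def by (intro smooth_on_intros smooth_on_rho smooth_on_sff smooth_on_ip smooth_on_meanc)

lemma smooth_on_mgmat: "smooth_on U (\<lambda>y. mgmat f y $ i $ j)"
  unfolding mgmat_def by (simp add: smooth_on_intros smooth_on_rho smooth_on_gmat)

lemma det_mgmat_nonzero:
  assumes "x \<in> U"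
  shows "det (mgmat f x) \<noteq> 0"
proof -
  have "mgmat f x = (rho f x)\<^sup>2 *\<^sub>R gmat f x"
    by (simp add: mgmat_def vec_eq_iff)
  moreover have "invertible (gmat f x)"
    using det_gmat_nonzero[OF assms] invertible_det_nz by blast
  ultimately have "invertible (mgmat f x)"
    using rho_pos[OF assms] scalar_invertible[of "(rho f x)\<^sup>2" "gmat f x"] by simp
  then show ?thesis
    using invertible_det_nz by blast
qed

lemma smooth_on_mginv: "smooth_on U (\<lambda>y. mginv f y $ i $ j)"
  unfolding mginv_def
  by (rule smooth_on_matrix_inv[OF open_domain smooth_on_mgmat det_mgmat_nonzero])

lemma smooth_on_christ: "smooth_on U (christ f l i j)"
  unfolding christ_def
  by (intro smooth_on_intros smooth_on_mginv smooth_on_pd smooth_on_mgmat)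

end

section \<open>Skew-adjointness of the Moebius curvature\<close>

text \<open>At a point, \<open>C m j k\<close> and \<open>DC i m j k\<close> stand for the Christoffel symbols and their
  \<open>i\<close>-th partial derivatives, \<open>T j k l\<close> for the lowered symbols and \<open>DT i j k l\<close> for the
  \<open>i\<close>-th partial derivative of \<open>T j k l\<close>. Hypothesis \<open>DT\<close> is the product rule combined with
  metric compatibility, \<open>DT_commute\<close> the symmetry of the second derivatives of \<open>g\<close>.\<close>

lemma riem_lowered_skew_algebraic:
  fixes g :: "'n::finite \<Rightarrow> 'n \<Rightarrow> real" and C :: "'n \<Rightarrow> 'n \<Rightarrow> 'n \<Rightarrow> real"
    and DC DT :: "'n \<Rightarrow> 'n \<Rightarrow> 'n \<Rightarrow> 'n \<Rightarrow> real"
  defines "T \<equiv> \<lambda>j k l. \<Sum>m\<in>UNIV. C m j k * g m l"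
    and "R \<equiv> \<lambda>l i j k. DC i l j k - DC j l i k + (\<Sum>m\<in>UNIV. C l i m * C m j k - C l j m * C m i k)"
  assumes g_commute: "\<And>a b. g a b = g b a"
    and DT: "\<And>i j k l. DT i j k l = (\<Sum>m\<in>UNIV. DC i m j k * g m l + C m j k * (T i m l + T i l m))"
    and DT_commute: "\<And>i j k l. DT i j k l + DT i j l k = DT j i k l + DT j i l k"
  shows "(\<Sum>a\<in>UNIV. R a i j k * g a q) + (\<Sum>a\<in>UNIV. R a i j q * g a k) = 0"
proof -
  define X where "X i j k l = (\<Sum>m\<in>UNIV. DC i m j k * g m l) + (\<Sum>m\<in>UNIV. C m j k * T i m l)" for i j k l
  define Y where "Y i j k l = (\<Sum>m\<in>UNIV. C m j k * T i l m)" for i j k l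
  have DT_XY: "DT i j k l = X i j k l + Y i j k l" for i j k l
    unfolding DT X_def Y_def by (simp add: sum.distrib distrib_left)
  have Y_commute: "Y i j k l = Y j i l k" for i j k l
    unfolding Y_def T_def sum_distrib_left
    by (subst sum.swap) (simp add: ac_simps g_commute)
  have R_X: "(\<Sum>a\<in>UNIV. R a i j k * g a q) = X i j k q - X j i k q" for i j k q
  proof -
    have CC: "(\<Sum>a\<in>UNIV. (\<Sum>m\<in>UNIV. C a i m * C m j k) * g a q) = (\<Sum>m\<in>UNIV. C m j k * T i m q)" for i j k q
      unfolding T_def sum_distrib_left sum_distrib_right
      by (subst sum.swap) (simp add: ac_simps)
    have "(\<Sum>a\<in>UNIV. R a i j k * g a q) =
        (\<Sum>a\<in>UNIV. DC i a j k * g a q) - (\<Sum>a\<in>UNIV. DC j a i k * g a q)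
        + (\<Sum>a\<in>UNIV. (\<Sum>m\<in>UNIV. C a i m * C m j k) * g a q)
        - (\<Sum>a\<in>UNIV. (\<Sum>m\<in>UNIV. C a j m * C m i k) * g a q)"
      unfolding R_def by (simp add: algebra_simps sum.distrib sum_subtractf)
    then show ?thesis
      unfolding CC X_def by simp
  qed
  show ?thesis
    using DT_commute[of i j k q] Y_commute[of i j k q] Y_commute[of i j q k]
    by (simp add: R_X DT_XY)
qed

lemma mip_mcurv_axis:
  "mip f x (mcurv f x X Y (axis k 1)) (axis q 1)
    = (\<Sum>i\<in>UNIV. \<Sum>j\<in>UNIV. X $ i * Y $ j * (\<Sum>a\<in>UNIV. riem f a i j k x * mgmat f x $ a $ q))"
proof -
  have "mip f x A (axis q 1) = (\<Sum>a\<in>UNIV. A $ a * mgmat f x $ a $ q)" for A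
    unfolding mip_def by (simp add: axis_def mult_delta_left mult_delta_right)
  moreover have "mcurv f x X Y (axis k 1) $ a = (\<Sum>i\<in>UNIV. \<Sum>j\<in>UNIV. X $ i * Y $ j * riem f a i j k x)" for a
    unfolding mcurv_def by (simp add: axis_def mult_delta_left mult_delta_right)
  ultimately have "mip f x (mcurv f x X Y (axis k 1)) (axis q 1)
      = (\<Sum>a\<in>UNIV. \<Sum>i\<in>UNIV. \<Sum>j\<in>UNIV. X $ i * Y $ j * (riem f a i j k x * mgmat f x $ a $ q))"
    by (simp add: sum_distrib_left sum_distrib_right ac_simps)
  also have "\<dots> = (\<Sum>i\<in>UNIV. \<Sum>j\<in>UNIV. \<Sum>a\<in>UNIV. X $ i * Y $ j * (riem f a i j k x * mgmat f x $ a $ q))"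
    by (subst sum.swap) (rule sum.cong[OF refl], rule sum.swap)
  finally show ?thesis
    by (simp add: sum_distrib_left)
qed

definition christ_lowered :: "(real^'n::finite \<Rightarrow> real^'m::finite) \<Rightarrow> 'n \<Rightarrow> 'n \<Rightarrow> 'n \<Rightarrow> real^'n \<Rightarrow> real" where
  "christ_lowered f j k l y = (\<Sum>m\<in>UNIV. christ f m j k y * mgmat f y $ m $ l)"

context umbilic_free_immersion
begin

lemma mginv_mgmat:
  assumes "y \<in> U"
  shows "(\<Sum>m\<in>UNIV. mginv f y $ m $ p * mgmat f y $ m $ l) = (if p = l then 1 else 0)"
proof -
  have "(mgmat f y ** mginv f y) $ l $ p = mat 1 $ l $ p"
    unfolding mginv_def by (simp add: matrix_inv_right[OF det_mgmat_nonzero[OF assms]])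
  then show ?thesis
    by (simp add: matrix_matrix_mult_def mat_def mgmat_commute[of f y l] mult.commute eq_commute[of l p])
qed

lemma christ_lowered_eq:
  assumes "y \<in> U"
  shows "christ_lowered f j k l y = 1/2 * (pd j (\<lambda>y. mgmat f y $ k $ l) y
    + pd k (\<lambda>y. mgmat f y $ j $ l) y - pd l (\<lambda>y. mgmat f y $ j $ k) y)"
proof -
  define B where "B p = pd j (\<lambda>y. mgmat f y $ k $ p) y + pd k (\<lambda>y. mgmat f y $ j $ p) y
    - pd p (\<lambda>y. mgmat f y $ j $ k) y" for p
  have "christ_lowered f j k l y =
      (\<Sum>p\<in>UNIV. 1/2 * B p * (\<Sum>m\<in>UNIV. mginv f y $ m $ p * mgmat f y $ m $ l))"
    unfolding christ_lowered_def christ_def B_def sum_distrib_left sum_distrib_right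
    by (subst sum.swap) (simp add: ac_simps)
  also have "\<dots> = 1/2 * B l"
    by (simp add: mginv_mgmat[OF assms] if_distrib cong: if_cong)
  finally show ?thesis
    by (simp add: B_def)
qed

lemma pd_mgmat_eq:
  assumes "y \<in> U"
  shows "pd j (\<lambda>y. mgmat f y $ k $ l) y = christ_lowered f j k l y + christ_lowered f j l k y"
proof -
  have "(\<lambda>y. mgmat f y $ a $ b) = (\<lambda>y. mgmat f y $ b $ a)" for a b
    by (simp add: mgmat_commute)
  then show ?thesis
    unfolding christ_lowered_eq[OF assms] by (simp add: algebra_simps)
qed

lemma smooth_on_christ_lowered: "smooth_on U (christ_lowered f j k l)"
  unfolding christ_lowered_def[abs_def] by (intro smooth_on_intros smooth_on_christ smooth_on_mgmat)

lemma pd_christ_lowered: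
  assumes x: "x \<in> U"
  shows "pd i (christ_lowered f j k l) x = (\<Sum>m\<in>UNIV. pd i (christ f m j k) x * mgmat f x $ m $ l
    + christ f m j k x * (christ_lowered f i m l x + christ_lowered f i l m x))"
proof -
  note diff_at = smooth_on_imp_differentiable_at[OF open_domain _ x]
  have "pd i (christ_lowered f j k l) x = (\<Sum>m\<in>UNIV. pd i (\<lambda>y. christ f m j k y * mgmat f y $ m $ l) x)"
    unfolding christ_lowered_def[abs_def]
    by (intro pd_sum diff_at smooth_on_mult[OF open_domain] smooth_on_christ smooth_on_mgmat) simp
  also have "\<dots> = (\<Sum>m\<in>UNIV. pd i (christ f m j k) x * mgmat f x $ m $ l
      + christ f m j k x * pd i (\<lambda>y. mgmat f y $ m $ l) x)"
    by (intro sum.cong refl pd_bounded_bilinear[OF bounded_bilinear_mult] diff_at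
        smooth_on_christ smooth_on_mgmat)
  finally show ?thesis
    by (simp add: pd_mgmat_eq[OF x])
qed

lemma pd_christ_lowered_commute:
  assumes x: "x \<in> U"
  shows "pd i (christ_lowered f j k l) x + pd i (christ_lowered f j l k) x
    = pd j (christ_lowered f i k l) x + pd j (christ_lowered f i l k) x"
proof -
  note diff_at = smooth_on_imp_differentiable_at[OF open_domain _ x]
  have "pd i (christ_lowered f j k l) x + pd i (christ_lowered f j l k) x
      = pd i (pd j (\<lambda>y. mgmat f y $ k $ l)) x" for i j
  proof -
    have "pd i (pd j (\<lambda>y. mgmat f y $ k $ l)) x =
        pd i (\<lambda>y. christ_lowered f j k l y + christ_lowered f j l k y) x"
      using pd_mgmat_eq by (intro pd_cong[OF open_domain x]) simp
    also have "\<dots> = pd i (christ_lowered f j k l) x + pd i (christ_lowered f j l k) x"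
      by (intro pd_add diff_at smooth_on_christ_lowered)
    finally show ?thesis ..
  qed
  moreover have "pd i (pd j (\<lambda>y. mgmat f y $ k $ l)) x = pd j (pd i (\<lambda>y. mgmat f y $ k $ l)) x"
    by (intro pd_commute[OF open_domain x] smooth_on_imp_differentiable_on diff_at
        smooth_on_pd smooth_on_mgmat)
  ultimately show ?thesis
    by simp
qed

lemma riem_lowered_skew:
  assumes x: "x \<in> U"
  shows "(\<Sum>a\<in>UNIV. riem f a i j k x * mgmat f x $ a $ q)
    + (\<Sum>a\<in>UNIV. riem f a i j q x * mgmat f x $ a $ k) = 0"
  using riem_lowered_skew_algebraic[where g = "\<lambda>a b. mgmat f x $ a $ b"
      and C = "\<lambda>m j k. christ f m j k x" and DC = "\<lambda>i m j k. pd i (christ f m j k) x"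
      and DT = "\<lambda>i j k l. pd i (christ_lowered f j k l) x",
      OF mgmat_commute pd_christ_lowered[OF x, unfolded christ_lowered_def[of f _ _ _ x]]
      pd_christ_lowered_commute[OF x]]
  by (simp add: riem_def)

lemma mip_mcurv_skew:
  assumes x: "x \<in> U"
  shows "mip f x (mcurv f x X Y Z) W + mip f x Z (mcurv f x X Y W) = 0"
proof -
  have "(\<lambda>Z W. mip f x (mcurv f x X Y Z) W + mip f x Z (mcurv f x X Y W)) = (\<lambda>Z W. 0)"
  proof (rule bilinear_eq_stdbasis)
    show "bilinear (\<lambda>Z W. mip f x (mcurv f x X Y Z) W + mip f x Z (mcurv f x X Y W))"
      by (rule bilinear_add[OF bilinear_compose_linear_left bilinear_compose_linear_right])
        (rule bilinear_mip linear_mcurv)+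
    show "bilinear (\<lambda>Z W. 0 :: real)"
      by (rule bilinear_zero)
  next
    fix Z W :: "real^'n"
    assume "Z \<in> Basis" "W \<in> Basis"
    then obtain k q where "Z = axis k 1" "W = axis q 1"
      using axis_inverse by blast
    then show "mip f x (mcurv f x X Y Z) W + mip f x Z (mcurv f x X Y W) = 0"
      using riem_lowered_skew[OF x]
      by (simp add: mip_commute[of f x "axis k 1"] mip_mcurv_axis flip: sum.distrib distrib_left)
  qed
  then show ?thesis
    by (simp add: fun_eq_iff)
qed

end

section \<open>Principal frames\<close>

definition principal_frame ::
  "(real^'n::finite \<Rightarrow> real^'m::finite) \<Rightarrow> real^'n \<Rightarrow> ('n \<Rightarrow> real^'n) \<Rightarrow> ('n \<Rightarrow> real^'m) \<Rightarrow> bool" where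
  "principal_frame f x e eta \<longleftrightarrow>
     (\<forall>i. e i \<noteq> 0) \<and> (\<forall>i j. i \<noteq> j \<longrightarrow> ip f x (e i) (e j) = 0) \<and>
     (\<forall>i Y. sff f x (e i) Y = ip f x (e i) Y *\<^sub>R eta i)"

lemma sff_principal_frame_right:
  assumes frame: "principal_frame f x e eta" and span: "span (range e) = UNIV"
  shows "sff f x Z (e j) = ip f x Z (e j) *\<^sub>R eta j"
proof (rule linear_eq_on_span[where f = "\<lambda>Z. sff f x Z (e j)" and g = "\<lambda>Z. ip f x Z (e j) *\<^sub>R eta j"
      and B = "range e"])
  show "linear (\<lambda>Z. sff f x Z (e j))"
    by (rule linear_sff_left)
  show "linear (\<lambda>Z. ip f x Z (e j) *\<^sub>R eta j)"
    by (rule linearI) (simp_all add: bilinear_ladd[OF bilinear_ip] bilinear_lmul[OF bilinear_ip] scaleR_add_left)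
  show "sff f x Z (e j) = ip f x Z (e j) *\<^sub>R eta j" if Z: "Z \<in> range e" for Z
  proof -
    obtain i where "Z = e i"
      using Z by blast
    then show ?thesis
      using frame by (cases "i = j") (auto simp: principal_frame_def)
  qed
  show "Z \<in> span (range e)"
    using span by simp
qed

context coordinate_immersion
begin

lemma span_principal_frame:
  assumes x: "x \<in> U" and frame: "principal_frame f x e eta"
  shows "span (range e) = UNIV"
proof -
  have pos: "ip f x (e i) (e i) > 0" and orth: "i \<noteq> j \<Longrightarrow> ip f x (e i) (e j) = 0" for i j
    using ip_pos[OF x] frame by (auto simp: principal_frame_def)
  have ip_left: "linear (\<lambda>A. ip f x A C)" for C
    using bilinear_ip[of f x] by (simp add: bilinear_def)
  have "inj e"
    by (rule injI) (metis orth pos less_irrefl)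
  have "u v = 0" if v: "v \<in> range e" and comb: "(\<Sum>w\<in>range e. u w *\<^sub>R w) = 0" for u v
  proof -
    obtain k where k: "v = e k"
      using v by blast
    have "0 = ip f x (\<Sum>w\<in>range e. u w *\<^sub>R w) (e k)"
      using comb bilinear_lzero[OF bilinear_ip] by simp
    also have "\<dots> = (\<Sum>w\<in>range e. u w * ip f x w (e k))"
      unfolding linear_sum[OF ip_left, of "\<lambda>w. u w *\<^sub>R w"] by (simp add: bilinear_lmul[OF bilinear_ip])
    also have "\<dots> = u (e k) * ip f x (e k) (e k)"
    proof -
      have "(\<Sum>w\<in>range e - {e k}. u w * ip f x w (e k)) = 0"
        using orth by (intro sum.neutral) (metis DiffE image_iff insertI1 mult_zero_right)
      then show ?thesis
        by (simp add: sum.remove[of "range e" "e k"])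
    qed
    finally show ?thesis
      using pos[of k] k by simp
  qed
  then have "independent (range e)"
    using real_vector.dependent_finite[of "range e"] by auto
  moreover have "card (range e) = CARD('n)"
    using card_image[OF \<open>inj e\<close>] by simp
  ultimately show ?thesis
    using card_ge_dim_independent[of "range e" UNIV] by auto
qed

end

context umbilic_free_immersion
begin

lemma ip_mcurv_skew:
  assumes "x \<in> U"
  shows "ip f x (mcurv f x X Y Z) W + ip f x Z (mcurv f x X Y W) = 0"
  using mip_mcurv_skew[OF assms, of X Y Z W] rho_pos[OF assms]
  by (simp add: mip_eq_rho_ip flip: distrib_left)

lemma mbeta_mcurv_skew:
  assumes "flat_normal_bundle U f" "semi_parallel_moebius U f" "x \<in> U"
  shows "mbeta f x (mcurv f x X Y Z) W + mbeta f x Z (mcurv f x X Y W) = 0"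
proof -
  have "\<forall>y\<in>U. nproj f y (mbeta f y Z W) = mbeta f y Z W"
    by (simp add: nproj_normal_space mbeta_in_normal_space)
  then have "rperp f x X Y (\<lambda>y. mbeta f y Z W) = 0"
    using assms(1,3) smooth_on_mbeta unfolding flat_normal_bundle_def by blast
  moreover have "rperp f x X Y (\<lambda>y. mbeta f y Z W)
      - mbeta f x (mcurv f x X Y Z) W - mbeta f x Z (mcurv f x X Y W) = 0"
    using assms(2,3) unfolding semi_parallel_moebius_def by blast
  ultimately have "0 - (mbeta f x (mcurv f x X Y Z) W + mbeta f x Z (mcurv f x X Y W)) = 0"
    by (simp only: diff_diff_eq)
  then show ?thesis
    by (simp only: diff_0 neg_equal_0_iff_equal)
qed

lemma ip_principal_frame_mcurv_eq_0:
  assumes flat: "flat_normal_bundle U f" and semi: "semi_parallel_moebius U f" and x: "x \<in> U"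
    and frame: "principal_frame f x e eta" and distinct: "\<And>i j. i \<noteq> j \<Longrightarrow> eta i \<noteq> eta j"
  shows "ip f x (e k) (mcurv f x X Y (e j)) = 0"
proof -
  define L where "L = mcurv f x X Y"
  have skew: "ip f x (L (e k)) (e j) = - ip f x (e k) (L (e j))"
    using ip_mcurv_skew[OF x] unfolding L_def by (simp add: eq_neg_iff_add_eq_0)
  show ?thesis
  proof (cases "k = j")
    case True
    then show ?thesis
      using skew ip_commute[of f x "L (e k)"] unfolding L_def by simp
  next
    case False
    have mbeta_left: "mbeta f x (e k) W = (rho f x * ip f x (e k) W) *\<^sub>R (eta k - meanc f x)" for W
      using frame by (simp add: mbeta_def principal_frame_def algebra_simps)
    have mbeta_right: "mbeta f x Z (e j) = (rho f x * ip f x Z (e j)) *\<^sub>R (eta j - meanc f x)" for Z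
      using sff_principal_frame_right[OF frame span_principal_frame[OF x frame]]
      by (simp add: mbeta_def algebra_simps)
    have "mbeta f x (L (e k)) (e j) + mbeta f x (e k) (L (e j)) = 0"
      unfolding L_def by (rule mbeta_mcurv_skew[OF flat semi x])
    then have "(rho f x * ip f x (e k) (L (e j))) *\<^sub>R (eta k - eta j) = 0"
      unfolding mbeta_left mbeta_right skew by (simp add: algebra_simps)
    then show ?thesis
      using distinct[OF False] rho_pos[OF x] unfolding L_def by simp
  qed
qed

lemma mcurv_eq_0_of_principal_frame:
  assumes flat: "flat_normal_bundle U f" and semi: "semi_parallel_moebius U f" and x: "x \<in> U"
    and frame: "principal_frame f x e eta" and distinct: "\<And>i j. i \<noteq> j \<Longrightarrow> eta i \<noteq> eta j"
  shows "mcurv f x X Y Z = 0"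
proof -
  have span: "UNIV \<subseteq> span (range e)"
    using span_principal_frame[OF x frame] by simp
  have "ip f x A (mcurv f x X Y B) = 0" for A B
  proof (rule bilinear_eq[of "\<lambda>A B. ip f x A (mcurv f x X Y B)" "\<lambda>A B. 0" UNIV "range e" UNIV "range e"])
    show "bilinear (\<lambda>A B. ip f x A (mcurv f x X Y B))"
      by (rule bilinear_compose_linear_right[OF bilinear_ip linear_mcurv])
    show "bilinear (\<lambda>A B. 0 :: real)"
      by (rule bilinear_zero)
    show "ip f x A (mcurv f x X Y B) = 0" if "A \<in> range e" "B \<in> range e" for A B
      using that ip_principal_frame_mcurv_eq_0[OF flat semi x frame distinct] by blast
  qed (use span in simp_all)
  then have "ip f x (mcurv f x X Y Z) (mcurv f x X Y Z) = 0" .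
  then show ?thesis
    using ip_pos[OF x, of "mcurv f x X Y Z"] by fastforce
qed

end

theorem theorem2:
  fixes U :: "(real^'n::finite) set" and f :: "real^'n \<Rightarrow> real^'m::finite"
  assumes "CARD('n) \<ge> 2"
    and "CARD('m) \<ge> CARD('n) + 2"
    and "immersion_on U f"
    and "umbilic_free U f"
    and "flat_normal_bundle U f"
    and "semi_parallel_moebius U f"
    and "n_distinct_principal_normals U f"
  shows "\<forall>x\<in>U. \<forall>X Y. independent {X, Y} \<and> X \<noteq> Y \<longrightarrow> msec f x X Y = 0"
proof -
  interpret umbilic_free_immersion U f
    using assms(3,4) by unfold_locales
  obtain eta :: "'n \<Rightarrow> real^'n \<Rightarrow> real^'m" where
    distinct: "\<forall>x\<in>U. \<forall>i j. i \<noteq> j \<longrightarrow> eta i x \<noteq> eta j x" and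
    frames: "\<forall>x\<in>U. \<exists>e. principal_frame f x e (\<lambda>i. eta i x)"
    using assms(7) unfolding n_distinct_principal_normals_def principal_frame_def by auto
  have "mcurv f x X Y Y = 0" if "x \<in> U" for x X Y
    using frames distinct mcurv_eq_0_of_principal_frame[OF assms(5,6) that] that by blast
  then show ?thesis
    by (simp add: msec_def mip_def)
qed

end
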